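(* Let $L$ be a geometric lattice of rank $r+1$ with linearly ordered atoms, let $B_1,\dots,B_m$ be its nbc-bases in lexicographic order, and let $\Delta_1,\dots,\Delta_m$ be as defined in the context. Then for each $j\ge 2$, $\Delta_j\cap\bigcup_{k=1}^{j-1}\Delta_k=\partial\Delta_j$.
   Context: A geometric lattice is a finite graded atomic lattice whose rank function satisfies the semimodular inequality. The order complex $\Delta(L)$ has the chains of $L-\{\hat 0,\hat 1\}$ as faces; facets correspond to maximal chains. Fix a linear order on the atoms; for a cover $x\lessdot y$ let $\lambda(x,y)$ be the least atom $a$ with $x\vee a=y$, and for a facet $F$ given by $\hat 0=x_0<\dots<x_{r+1}=\hat 1$ its minimal labeling is $\lambda(F)=(\lambda(x_0,x_1),\dots,\lambda(x_r,x_{r+1}))$. A basis is a set of $r+1$ atoms with join $\hat 1$; a circuit is a minimal dependent set of atoms; a broken circuit is a circuit minus its least element; an nbc-basis is a basis containing no broken circuit. The nbc-bases, each written as an increasing sequence, are ordered lexicographically: $B_1,\dots,B_m$. For an ordering $(b_1,\dots,b_{r+1})$ of a basis $B$, the associated facet is $b_1<b_1\vee b_2<\dots<b_1\vee\dots\vee b_r$ and its basis labeling is $(b_1,\dots,b_{r+1})$. $\Sigma_j$ is the union of the facets associated to all orderings of $B_j$, and $\Delta_j$ is the pure subcomplex of $\Sigma_j$ generated by those facets of $\Sigma_j$ whose minimal labeling coincides with their basis labeling. For $j\ge2$, $\Delta_j$ is an $(r-1)$-ball and $\partial\Delta_j$ denotes its boundary subcomplex. *)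

theory Defs
  imports Main "HOL-Library.Finite_Lattice"
begin

text \<open>The lattice L is the finite lattice given by the type 'a (class
finite_lattice_complete, hence a complete lattice with bot and top).
The linear order on the atoms is given by an injective weight
w :: 'a => nat on the atoms: a precedes b iff w a < w b.\<close>

definition covers :: "'a::order \<Rightarrow> 'a \<Rightarrow> bool" where
  "covers x y \<longleftrightarrow> x < y \<and> \<not> (\<exists>z. x < z \<and> z < y)"

definition atoms :: "'a::finite_lattice_complete set" where
  "atoms = {a. covers bot a}"

definition rk :: "'a::finite_lattice_complete \<Rightarrow> nat" where
  "rk x = Max {card C | C. C \<subseteq> {y. y \<le> x} \<and> Complete_Partial_Order.chain (\<le>) C} - 1"

definition graded :: "'a::finite_lattice_complete itself \<Rightarrow> bool" where
  "graded _ \<longleftrightarrow> (\<exists>\<rho>::'a \<Rightarrow> nat. \<rho> bot = 0 \<and> (\<forall>x y. covers x y \<longrightarrow> \<rho> y = \<rho> x + 1))"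

definition atomic :: "'a::finite_lattice_complete itself \<Rightarrow> bool" where
  "atomic _ \<longleftrightarrow> (\<forall>x::'a. x = Sup {a \<in> atoms. a \<le> x})"

definition semimodular :: "'a::finite_lattice_complete itself \<Rightarrow> bool" where
  "semimodular _ \<longleftrightarrow> (\<forall>x y::'a. rk (sup x y) + rk (inf x y) \<le> rk x + rk y)"

definition geometric_lattice :: "'a::finite_lattice_complete itself \<Rightarrow> bool" where
  "geometric_lattice T \<longleftrightarrow> graded T \<and> atomic T \<and> semimodular T"

definition minlab :: "('a::finite_lattice_complete \<Rightarrow> nat) \<Rightarrow> 'a \<Rightarrow> 'a \<Rightarrow> 'a" where
  "minlab w x y = (ARG_MIN w a. a \<in> atoms \<and> sup x a = y)"

definition faces :: "'a::finite_lattice_complete set set" where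
  "faces = {F. F \<subseteq> UNIV - {bot, top} \<and> Complete_Partial_Order.chain (\<le>) F}"

definition facets :: "'a::finite_lattice_complete set set" where
  "facets = {F \<in> faces. \<forall>G \<in> faces. F \<subseteq> G \<longrightarrow> G = F}"

definition chain_elt :: "'a::finite_lattice_complete set \<Rightarrow> nat \<Rightarrow> 'a" where
  "chain_elt F i = (THE x. x \<in> F \<union> {bot, top} \<and> rk x = i)"

definition min_labeling :: "('a::finite_lattice_complete \<Rightarrow> nat) \<Rightarrow> 'a set \<Rightarrow> 'a list" where
  "min_labeling w F =
     map (\<lambda>i. minlab w (chain_elt F i) (chain_elt F (Suc i))) [0..<rk (top::'a)]"

definition indep :: "'a::finite_lattice_complete set \<Rightarrow> bool" where
  "indep S \<longleftrightarrow> S \<subseteq> atoms \<and> rk (Sup S) = card S"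

definition basis :: "'a::finite_lattice_complete set \<Rightarrow> bool" where
  "basis B \<longleftrightarrow> B \<subseteq> atoms \<and> card B = rk (top::'a) \<and> Sup B = top"

definition circuit :: "'a::finite_lattice_complete set \<Rightarrow> bool" where
  "circuit C \<longleftrightarrow> C \<subseteq> atoms \<and> \<not> indep C \<and> (\<forall>D. D \<subset> C \<longrightarrow> indep D)"

definition broken_circuit :: "('a::finite_lattice_complete \<Rightarrow> nat) \<Rightarrow> 'a set \<Rightarrow> bool" where
  "broken_circuit w S \<longleftrightarrow> (\<exists>C. circuit C \<and> S = C - {ARG_MIN w a. a \<in> C})"

definition nbc_basis :: "('a::finite_lattice_complete \<Rightarrow> nat) \<Rightarrow> 'a set \<Rightarrow> bool" where
  "nbc_basis w B \<longleftrightarrow> basis B \<and> \<not> (\<exists>S \<subseteq> B. broken_circuit w S)"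

text \<open>a basis written as increasing sequence, encoded by weights; lex order\<close>
definition basis_key :: "('a \<Rightarrow> nat) \<Rightarrow> 'a set \<Rightarrow> nat list" where
  "basis_key w B = sorted_list_of_set (w ` B)"

definition lex_less :: "nat list \<Rightarrow> nat list \<Rightarrow> bool" where
  "lex_less xs ys \<longleftrightarrow> (xs, ys) \<in> lexord {(a, b). a < b}"

definition assoc_facet :: "'a::finite_lattice_complete list \<Rightarrow> 'a set" where
  "assoc_facet bs = {Sup (set (take i bs)) | i. 1 \<le> i \<and> i < length bs}"

definition Delta_facets :: "('a::finite_lattice_complete \<Rightarrow> nat) \<Rightarrow> 'a set \<Rightarrow> 'a set set" where
  "Delta_facets w B = {assoc_facet bs | bs. distinct bs \<and> set bs = B \<and>
                          min_labeling w (assoc_facet bs) = bs}"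

definition Delta :: "('a::finite_lattice_complete \<Rightarrow> nat) \<Rightarrow> 'a set \<Rightarrow> 'a set set" where
  "Delta w B = {G. \<exists>F \<in> Delta_facets w B. G \<subseteq> F}"

text \<open>boundary of a pure simplicial complex K whose facets have d vertices:
  generated by the codimension-one faces lying in exactly one facet\<close>
definition cx_facets :: "'b set set \<Rightarrow> 'b set set" where
  "cx_facets K = {F \<in> K. \<forall>G \<in> K. F \<subseteq> G \<longrightarrow> G = F}"

definition boundary :: "nat \<Rightarrow> 'b set set \<Rightarrow> 'b set set" where
  "boundary d K = {G. \<exists>R \<in> K. G \<subseteq> R \<and> card R + 1 = d \<and>
                        card {F \<in> cx_facets K. R \<subseteq> F} = 1}"

end

theory Submission
  imports Defs
begin

text \<open>The facets of \<open>\<Delta>\<^sub>B\<close> are the maximal chains whose minimal labels form \<open>B\<close>, and the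
  argument is local to rank-two intervals \<open>u < v\<close> of such chains. Joining \<open>u\<close> with the least atom
  of \<open>v\<close> not below \<open>u\<close> gives the only middle element with ascending labels; replacing any other
  middle element by it ("straightening") makes the label word smaller and does not increase the
  label set. A ridge of \<open>\<Delta>\<^sub>B\<close> is a facet minus one element, and it is on the boundary iff no
  other middle element keeps the label set \<open>B\<close>. At an ascent the swapped middle element gives a
  second facet, so a boundary ridge sits at a descent, and straightening it leads into an earlier
  \<open>\<Delta>\<close>. Conversely, if \<open>G \<in> \<Delta>\<^sub>B\<close> also lies in an earlier \<open>\<Delta>\<close>, the unique chain through
  \<open>G\<close> that ascends outside \<open>G\<close> lies in an earlier \<open>\<Delta>\<close>, so the chain of \<open>\<Delta>\<^sub>B\<close> through \<open>G\<close>
  with least label word has a descent outside \<open>G\<close>, whose ridge is on the boundary.\<close>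

lemma lexord_insort_less:
  fixes a b :: nat
  assumes "sorted xs" "a \<notin> set xs" "b \<notin> set xs" "a < b"
  shows "(insort a xs, insort b xs) \<in> lexord {(x, y). x < y}"
  using assms
proof (induction xs)
  case (Cons c cs)
  show ?case
  proof (cases "a < c")
    case True
    then show ?thesis using Cons by (cases "b \<le> c") auto
  next
    case False
    then show ?thesis using Cons by auto
  qed
qed simp

lemma lex_less_sorted_insert:
  fixes a b :: nat
  assumes "finite S" "a \<notin> S" "b \<notin> S" "a < b"
  shows "lex_less (sorted_list_of_set (insert a S)) (sorted_list_of_set (insert b S))"
  using assms lexord_insort_less[of "sorted_list_of_set S" a b]
  by (simp add: lex_less_def sorted_list_of_set_insert)

lemma lex_less_trans: "lex_less xs ys \<Longrightarrow> lex_less ys zs \<Longrightarrow> lex_less xs zs"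
  unfolding lex_less_def by (erule lexord_trans) (auto simp: trans_def)

lemma lex_less_irrefl: "\<not> lex_less xs xs"
  unfolding lex_less_def by (rule lexord_irreflexive) auto

definition lex_le :: "nat list \<Rightarrow> nat list \<Rightarrow> bool" where
  "lex_le xs ys \<longleftrightarrow> xs = ys \<or> lex_less xs ys"

lemma lex_le_trans: "lex_le xs ys \<Longrightarrow> lex_le ys zs \<Longrightarrow> lex_le xs zs"
  unfolding lex_le_def using lex_less_trans by blast

lemma lex_le_less_trans: "lex_le xs ys \<Longrightarrow> lex_less ys zs \<Longrightarrow> lex_less xs zs"
  unfolding lex_le_def using lex_less_trans by blast

lemma ex_covers_le:
  fixes x y :: "'a::{finite, order}"
  assumes "x < y"
  obtains m where "covers x m" "m \<le> y"
proof -
  have "finite {z. x < z \<and> z \<le> y}" "{z. x < z \<and> z \<le> y} \<noteq> {}" using assms by auto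
  then obtain m where m: "m \<in> {z. x < z \<and> z \<le> y}" "\<forall>b \<in> {z. x < z \<and> z \<le> y}. b \<le> m \<longrightarrow> m = b"
    using finite_has_minimal by blast
  have "covers x m" unfolding covers_def
  proof (intro conjI notI)
    show "x < m" using m(1) by simp
    assume "\<exists>z. x < z \<and> z < m"
    then obtain z where "x < z" "z < m" by blast
    then show False using m by force
  qed
  with m(1) show thesis using that by simp
qed

lemma ex_covers_ge:
  fixes x y :: "'a::{finite, order}"
  assumes "x < y"
  obtains m where "covers m y" "x \<le> m"
proof -
  have "finite {z. x \<le> z \<and> z < y}" "{z. x \<le> z \<and> z < y} \<noteq> {}" using assms by auto
  then obtain m where m: "m \<in> {z. x \<le> z \<and> z < y}" "\<forall>b \<in> {z. x \<le> z \<and> z < y}. m \<le> b \<longrightarrow> m = b"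
    using finite_has_maximal by blast
  have "covers m y" unfolding covers_def
  proof (intro conjI notI)
    show "m < y" using m(1) by simp
    assume "\<exists>z. m < z \<and> z < y"
    then obtain z where z: "m < z" "z < y" by blast
    with m(1) have "z \<in> {z. x \<le> z \<and> z < y}" by auto
    with m(2) z(1) show False by auto
  qed
  with m(1) show thesis using that by simp
qed

context
  fixes \<rho> :: "'a::finite_lattice_complete \<Rightarrow> nat"
  assumes grading_bot: "\<rho> bot = 0"
    and grading_covers: "\<And>x y. covers x y \<Longrightarrow> \<rho> y = \<rho> x + 1"
begin

lemma grading_strict_mono: "x < y \<Longrightarrow> \<rho> x < \<rho> y"
proof (induction "card {z. x < z \<and> z \<le> y}" arbitrary: x rule: less_induct)
  case less
  obtain m where m: "covers x m" "m \<le> y" using ex_covers_le[OF less.prems] .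
  then have xm: "x < m" and \<rho>m: "\<rho> m = \<rho> x + 1"
    using grading_covers[OF m(1)] by (auto simp: covers_def)
  show ?case
  proof (cases "m = y")
    case True
    then show ?thesis using \<rho>m by simp
  next
    case False
    then have my: "m < y" using m(2) by simp
    have "{z. m < z \<and> z \<le> y} \<subset> {z. x < z \<and> z \<le> y}"
      using xm m(2) less_trans[OF xm] by auto
    then have "card {z. m < z \<and> z \<le> y} < card {z. x < z \<and> z \<le> y}"
      by (rule psubset_card_mono[rotated]) simp
    then have "\<rho> m < \<rho> y" using less.hyps my by blast
    then show ?thesis using \<rho>m by simp
  qed
qed

lemma grading_mono: "x \<le> y \<Longrightarrow> \<rho> x \<le> \<rho> y"
  using grading_strict_mono by (metis le_less less_imp_le_nat)

lemma card_chain_le_grading: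
  assumes "C \<subseteq> {y. y \<le> x}" "Complete_Partial_Order.chain (\<le>) C"
  shows "card C \<le> \<rho> x + 1"
proof -
  have "inj_on \<rho> C"
    using assms(2) grading_strict_mono unfolding inj_on_def Complete_Partial_Order.chain_def
    by (metis less_le nat_less_le)
  moreover have "\<rho> ` C \<subseteq> {..\<rho> x}" using assms(1) grading_mono by auto
  ultimately have "card C \<le> card {..\<rho> x}" by (metis card_image card_mono finite_atMost)
  then show ?thesis by simp
qed

lemma ex_chain_card_grading:
  "\<exists>C. C \<subseteq> {y. y \<le> x} \<and> Complete_Partial_Order.chain (\<le>) C \<and> card C = \<rho> x + 1"
proof (induction "\<rho> x" arbitrary: x)
  case 0
  have "x = bot"
  proof (rule ccontr)
    assume "x \<noteq> bot"
    then have "bot < x" by (simp add: bot.not_eq_extremum)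
    then show False using grading_strict_mono[of bot x] grading_bot 0 by simp
  qed
  then show ?case using 0
    by (intro exI[of _ "{bot}"]) (auto simp: Complete_Partial_Order.chain_def)
next
  case (Suc n)
  then have "x \<noteq> bot" using grading_bot by auto
  then have "bot < x" by (simp add: bot.not_eq_extremum)
  then obtain m where m: "covers m x" using ex_covers_ge by blast
  then have "m < x" "\<rho> x = \<rho> m + 1" using grading_covers[OF m] unfolding covers_def by auto
  then obtain C where C: "C \<subseteq> {y. y \<le> m}" "Complete_Partial_Order.chain (\<le>) C" "card C = \<rho> m + 1"
    using Suc.hyps by auto
  have "x \<notin> C" using C(1) \<open>m < x\<close> by auto
  then have "card (insert x C) = \<rho> x + 1" using C(3) \<open>\<rho> x = \<rho> m + 1\<close> by simp
  moreover have "insert x C \<subseteq> {y. y \<le> x}" using C(1) \<open>m < x\<close> by auto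
  moreover have "Complete_Partial_Order.chain (\<le>) (insert x C)"
    using C(1,2) \<open>m < x\<close> unfolding Complete_Partial_Order.chain_def by auto
  ultimately show ?case by blast
qed

lemma rk_eq_grading: "rk x = \<rho> x"
proof -
  let ?S = "{card C | C. C \<subseteq> {y. y \<le> x} \<and> Complete_Partial_Order.chain (\<le>) C}"
  have "?S \<subseteq> card ` (UNIV :: 'a set set)" by auto
  then have "finite ?S" by (meson finite finite_surj)
  moreover have "\<rho> x + 1 \<in> ?S" using ex_chain_card_grading[of x] by (metis (mono_tags, lifting) mem_Collect_eq)
  moreover have "\<forall>s\<in>?S. s \<le> \<rho> x + 1" using card_chain_le_grading by auto
  ultimately have "Max ?S = \<rho> x + 1" by (intro Max_eqI) auto
  then show ?thesis unfolding rk_def by simp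
qed

end

context
  assumes graded: "graded TYPE('a::finite_lattice_complete)"
begin

lemma rk_bot: "rk (bot::'a) = 0"
  and rk_covers: "covers x y \<Longrightarrow> rk y = rk x + 1"
  and rk_strict_mono: "x < y \<Longrightarrow> rk x < rk y"
  for x y :: 'a
proof -
  obtain \<rho> :: "'a \<Rightarrow> nat" where \<rho>: "\<rho> bot = 0" "\<forall>x y. covers x y \<longrightarrow> \<rho> y = \<rho> x + 1"
    using graded unfolding graded_def by blast
  then have rk: "rk x = \<rho> x" for x using rk_eq_grading[of \<rho>] by blast
  show "rk (bot::'a) = 0" using \<rho>(1) by (simp add: rk)
  show "covers x y \<Longrightarrow> rk y = rk x + 1" using \<rho>(2) by (simp add: rk)
  show "x < y \<Longrightarrow> rk x < rk y" using grading_strict_mono[of \<rho> x y] \<rho> by (simp add: rk)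
qed

lemma eq_if_le_rk_eq: "x \<le> y \<Longrightarrow> rk x = rk y \<Longrightarrow> x = y" for x y :: 'a
  using rk_strict_mono[of x y] by (auto simp: le_less)

lemma covers_if_rk_Suc:
  fixes x y :: 'a
  assumes "x < y" "rk y = rk x + 1"
  shows "covers x y"
  unfolding covers_def
proof (intro conjI notI)
  show "x < y" by fact
  assume "\<exists>z. x < z \<and> z < y"
  then obtain z where "x < z" "z < y" by blast
  then have "rk x < rk z" "rk z < rk y" using rk_strict_mono by auto
  then show False using assms(2) by simp
qed

lemma rk_atom: "a \<in> atoms \<Longrightarrow> rk a = 1" for a :: 'a
  using rk_covers[of bot a] rk_bot by (simp add: atoms_def)

end

lemma sup_eq_iff_covers:
  fixes x y a :: "'a::lattice"
  assumes c: "covers x y"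
  shows "sup x a = y \<longleftrightarrow> a \<le> y \<and> \<not> a \<le> x"
proof
  assume "sup x a = y"
  then have "a \<le> y" by auto
  moreover have "\<not> a \<le> x" using \<open>sup x a = y\<close> c unfolding covers_def by (metis sup.absorb1 order.irrefl)
  ultimately show "a \<le> y \<and> \<not> a \<le> x" by simp
next
  assume a: "a \<le> y \<and> \<not> a \<le> x"
  then have "x < sup x a" by (metis sup.cobounded1 sup.cobounded2 le_less)
  moreover have "sup x a \<le> y" using a c unfolding covers_def by auto
  ultimately show "sup x a = y" using c unfolding covers_def by (auto simp: le_less)
qed

lemma le_if_le_two_covers:
  fixes u y y' a :: "'a::lattice"
  assumes "covers u y" "covers u y'" "y \<noteq> y'" "a \<le> y" "a \<le> y'"
  shows "a \<le> u"
proof -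
  have uy: "u < y" "u < y'" using assms by (auto simp: covers_def)
  have "inf y y' \<noteq> y"
  proof
    assume "inf y y' = y"
    then have "y \<le> y'" by (metis inf.absorb_iff1)
    then have "y = y'" using assms(2) uy(1) unfolding covers_def by (auto simp: le_less)
    then show False using assms(3) by simp
  qed
  then have "inf y y' < y" by (meson inf_le1 order.not_eq_order_implies_strict)
  moreover have "u \<le> inf y y'" using uy by (simp add: less_imp_le)
  ultimately have "inf y y' = u" using assms(1) unfolding covers_def by (auto simp: le_less)
  then show ?thesis using assms(4,5) by (metis le_inf_iff)
qed

lemma ex_atom_le_not_le:
  fixes x y :: "'a::finite_lattice_complete"
  assumes "atomic TYPE('a)" "x < y"
  shows "\<exists>a\<in>atoms. a \<le> y \<and> \<not> a \<le> x"
proof (rule ccontr)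
  assume "\<not> ?thesis"
  then have "Sup {a \<in> atoms. a \<le> y} \<le> x" by (auto intro: Sup_least)
  moreover have "y = Sup {a \<in> atoms. a \<le> y}" using assms(1) by (simp add: atomic_def)
  ultimately show False using assms(2) by simp
qed

lemma covers_sup_atom:
  fixes x a :: "'a::finite_lattice_complete"
  assumes "graded TYPE('a)" "semimodular TYPE('a)" and a: "a \<in> atoms" "\<not> a \<le> x"
  shows "rk (sup x a) = rk x + 1" "covers x (sup x a)"
proof -
  have "inf x a \<noteq> a" using a(2) by (metis inf.absorb_iff2 inf_commute)
  then have "inf x a < a" by (meson inf_le2 order.not_eq_order_implies_strict)
  moreover have "covers bot a" using a(1) by (simp add: atoms_def)
  ultimately have "inf x a = bot" unfolding covers_def by (metis bot.not_eq_extremum)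
  moreover have "rk (sup x a) + rk (inf x a) \<le> rk x + rk a"
    using assms(2) by (simp add: semimodular_def)
  ultimately have le: "rk (sup x a) \<le> rk x + 1" using rk_atom[OF assms(1) a(1)] rk_bot[OF assms(1)] by simp
  have lt: "x < sup x a" using a(2) by (metis sup.cobounded1 sup.cobounded2 le_less)
  show rk: "rk (sup x a) = rk x + 1" using le rk_strict_mono[OF assms(1) lt] by simp
  show "covers x (sup x a)" using covers_if_rk_Suc[OF assms(1) lt rk] .
qed

locale atom_ordered_geometric_lattice =
  fixes w :: "'a::finite_lattice_complete \<Rightarrow> nat"
  assumes geometric: "geometric_lattice TYPE('a)"
    and inj_w: "inj_on w atoms"
begin

lemma graded: "graded TYPE('a)" and atomic: "atomic TYPE('a)" and semimodular: "semimodular TYPE('a)"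
  using geometric by (simp_all add: geometric_lattice_def)

lemmas rk_bot = rk_bot[OF graded] and rk_covers = rk_covers[OF graded]
  and eq_if_le_rk_eq = eq_if_le_rk_eq[OF graded] and covers_if_rk_Suc = covers_if_rk_Suc[OF graded]
  and covers_sup_atom = covers_sup_atom[OF graded semimodular]

lemma eq_if_w_eq: "a \<in> atoms \<Longrightarrow> b \<in> atoms \<Longrightarrow> w a = w b \<Longrightarrow> a = b"
  using inj_w by (meson inj_onD)

definition least_atom :: "'a \<Rightarrow> 'a \<Rightarrow> 'a" where
  "least_atom u v = (ARG_MIN w a. a \<in> atoms \<and> a \<le> v \<and> \<not> a \<le> u)"

lemma least_atom:
  assumes "u < v"
  shows "least_atom u v \<in> atoms" "least_atom u v \<le> v" "\<not> least_atom u v \<le> u"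
    and "\<And>b. b \<in> atoms \<Longrightarrow> b \<le> v \<Longrightarrow> \<not> b \<le> u \<Longrightarrow> w (least_atom u v) \<le> w b"
proof -
  obtain a where "a \<in> atoms \<and> a \<le> v \<and> \<not> a \<le> u" using ex_atom_le_not_le[OF atomic assms] by blast
  note arg_min_nat_lemma[of "\<lambda>a. a \<in> atoms \<and> a \<le> v \<and> \<not> a \<le> u", OF this, of w]
  then show "least_atom u v \<in> atoms" "least_atom u v \<le> v" "\<not> least_atom u v \<le> u"
    and "\<And>b. b \<in> atoms \<Longrightarrow> b \<le> v \<Longrightarrow> \<not> b \<le> u \<Longrightarrow> w (least_atom u v) \<le> w b"
    unfolding least_atom_def by auto
qed

lemma least_atom_eqI:
  assumes "u < v" "c \<in> atoms" "c \<le> v" "\<not> c \<le> u"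
    and "\<And>b. b \<in> atoms \<Longrightarrow> b \<le> v \<Longrightarrow> \<not> b \<le> u \<Longrightarrow> w c \<le> w b"
  shows "least_atom u v = c"
proof -
  have "w (least_atom u v) \<le> w c" using least_atom(4)[OF assms(1-4)] .
  moreover have "w c \<le> w (least_atom u v)" using assms(5) least_atom(1-3)[OF assms(1)] by blast
  ultimately show ?thesis using eq_if_w_eq least_atom(1)[OF assms(1)] assms(2) by simp
qed

lemma minlab_eq_least_atom: "covers x y \<Longrightarrow> minlab w x y = least_atom x y"
  unfolding minlab_def least_atom_def by (simp add: sup_eq_iff_covers)

text \<open>A maximal chain \<open>bot = z 0 < z 1 < \<dots> < z (rk top) = top\<close> is padded with \<open>top\<close>, so that
  maximal chains with the same elements are equal as functions.\<close>

definition max_chain :: "(nat \<Rightarrow> 'a) \<Rightarrow> bool" where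
  "max_chain z \<longleftrightarrow> z 0 = bot \<and> (\<forall>k < rk (top::'a). covers (z k) (z (Suc k))) \<and> (\<forall>k \<ge> rk (top::'a). z k = top)"

definition label :: "(nat \<Rightarrow> 'a) \<Rightarrow> nat \<Rightarrow> 'a" where
  "label z k = minlab w (z k) (z (Suc k))"

definition labels :: "(nat \<Rightarrow> 'a) \<Rightarrow> 'a list" where
  "labels z = map (label z) [0..<rk (top::'a)]"

definition label_set :: "(nat \<Rightarrow> 'a) \<Rightarrow> 'a set" where
  "label_set z = label z ` {..<rk (top::'a)}"

definition chain_facet :: "(nat \<Rightarrow> 'a) \<Rightarrow> 'a set" where
  "chain_facet z = z ` {1..<rk (top::'a)}"

definition label_word :: "(nat \<Rightarrow> 'a) \<Rightarrow> nat list" where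
  "label_word z = map w (labels z)"

lemma set_labels: "set (labels z) = label_set z"
  unfolding labels_def label_set_def by auto

context
  fixes z :: "nat \<Rightarrow> 'a"
  assumes z: "max_chain z"
begin

lemma max_chain_bot: "z 0 = bot" and max_chain_top: "k \<ge> rk (top::'a) \<Longrightarrow> z k = top"
  and max_chain_covers: "k < rk (top::'a) \<Longrightarrow> covers (z k) (z (Suc k))"
  using z by (simp_all add: max_chain_def)

lemma max_chain_rk: "k \<le> rk (top::'a) \<Longrightarrow> rk (z k) = k"
proof (induction k)
  case (Suc k)
  then show ?case using rk_covers[OF max_chain_covers[of k]] by simp
qed (simp add: max_chain_bot rk_bot)

lemma max_chain_mono: "j \<le> k \<Longrightarrow> z j \<le> z k"
proof -
  have "z k \<le> z (Suc k)" for k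
    using max_chain_covers max_chain_top by (cases "k < rk (top::'a)") (auto simp: covers_def less_imp_le)
  then show "j \<le> k \<Longrightarrow> z j \<le> z k" using lift_Suc_mono_le[of z] by blast
qed

lemma max_chain_inj: "j \<le> rk (top::'a) \<Longrightarrow> k \<le> rk (top::'a) \<Longrightarrow> z j = z k \<Longrightarrow> j = k"
  using max_chain_rk by metis

lemma max_chain_strict_mono: "j < k \<Longrightarrow> k \<le> rk (top::'a) \<Longrightarrow> z j < z k"
  using max_chain_mono[of j k] max_chain_inj[of j k] by (auto simp: le_less)

lemma label:
  assumes "k < rk (top::'a)"
  shows "label z k = least_atom (z k) (z (Suc k))" "label z k \<in> atoms" "label z k \<le> z (Suc k)"
    "\<not> label z k \<le> z k" "\<And>b. b \<in> atoms \<Longrightarrow> b \<le> z (Suc k) \<Longrightarrow> \<not> b \<le> z k \<Longrightarrow> w (label z k) \<le> w b"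
    "sup (z k) (label z k) = z (Suc k)"
proof -
  have c: "covers (z k) (z (Suc k))" using max_chain_covers[OF assms] .
  then show l: "label z k = least_atom (z k) (z (Suc k))" unfolding label_def by (rule minlab_eq_least_atom)
  have "z k < z (Suc k)" using c by (simp add: covers_def)
  then show "label z k \<in> atoms" "label z k \<le> z (Suc k)" "\<not> label z k \<le> z k"
    "\<And>b. b \<in> atoms \<Longrightarrow> b \<le> z (Suc k) \<Longrightarrow> \<not> b \<le> z k \<Longrightarrow> w (label z k) \<le> w b"
    using least_atom l by auto
  then show "sup (z k) (label z k) = z (Suc k)" using sup_eq_iff_covers[OF c] by simp
qed

lemma label_le: "j < k \<Longrightarrow> k \<le> rk (top::'a) \<Longrightarrow> label z j \<le> z k"
  using label(3) max_chain_mono by (meson Suc_leI less_le_trans order_trans)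

lemma max_chain_eq_Sup_labels: "k \<le> rk (top::'a) \<Longrightarrow> z k = Sup (label z ` {..<k})"
proof (induction k)
  case (Suc k)
  have "Sup (label z ` {..<Suc k}) = sup (label z k) (z k)" using Suc by (simp add: lessThan_Suc)
  also have "\<dots> = z (Suc k)" using label(6) Suc.prems by (simp add: sup_commute)
  finally show ?case by simp
qed (simp add: max_chain_bot)

lemma inj_on_label: "inj_on (label z) {..<rk (top::'a)}"
proof (rule inj_onI)
  fix j k assume j: "j \<in> {..<rk (top::'a)}" and k: "k \<in> {..<rk (top::'a)}" and e: "label z j = label z k"
  have False if "j < k" "k < rk (top::'a)" "label z j = label z k" for j k
    using label_le[of j k] label(4)[of k] that by simp
  then show "j = k" using j k e by (metis lessThan_iff linorder_neqE_nat)
qed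

lemma distinct_labels: "distinct (labels z)"
  unfolding labels_def using inj_on_label by (simp add: distinct_map lessThan_atLeast0)

lemma basis_label_set: "basis (label_set z)"
proof -
  have "card (label_set z) = rk (top::'a)" unfolding label_set_def using inj_on_label card_image by fastforce
  moreover have "label_set z \<subseteq> atoms" unfolding label_set_def using label(2) by auto
  moreover have "Sup (label_set z) = top"
    unfolding label_set_def using max_chain_eq_Sup_labels[of "rk (top::'a)"] max_chain_top by simp
  ultimately show ?thesis by (simp add: basis_def)
qed

end

lemma circuit_le_Sup_diff:
  fixes C :: "'a set"
  assumes c: "circuit C" and e: "e \<in> C"
  shows "e \<le> Sup (C - {e})"
proof (rule ccontr)
  assume n: "\<not> e \<le> Sup (C - {e})"
  have "e \<in> atoms" using c e by (auto simp: circuit_def)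
  moreover have "indep (C - {e})" using c e unfolding circuit_def by blast
  ultimately have "rk (sup (Sup (C - {e})) e) = card (C - {e}) + 1"
    using covers_sup_atom(1)[OF _ n] by (simp add: indep_def)
  moreover have "sup (Sup (C - {e})) e = Sup C" using e by (metis Sup_insert insert_Diff sup_commute)
  moreover have "card (C - {e}) + 1 = card C" using e by (metis Suc_eq_plus1 card_Suc_Diff1 finite)
  ultimately have "indep C" using c unfolding indep_def circuit_def by simp
  then show False using c by (simp add: circuit_def)
qed

lemma broken_circuit_not_empty: "broken_circuit w S \<Longrightarrow> S \<noteq> {}"
proof
  assume "broken_circuit w S" "S = {}"
  then obtain C where c: "circuit C" and "C - {ARG_MIN w a. a \<in> C} = {}"
    unfolding broken_circuit_def by auto
  then obtain a where a: "C \<subseteq> {a}" by blast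
  have "indep C"
  proof (cases "C = {}")
    case True
    then show ?thesis using rk_bot by (simp add: indep_def)
  next
    case False
    then have "C = {a}" using a by blast
    moreover have "a \<in> atoms" using c \<open>C = {a}\<close> by (simp add: circuit_def)
    ultimately show ?thesis using rk_covers[of bot a] rk_bot by (simp add: indep_def atoms_def)
  qed
  then show False using c by (simp add: circuit_def)
qed

context
  fixes z :: "nat \<Rightarrow> 'a"
  assumes z: "max_chain z"
begin

lemma ex_last_label:
  assumes "S \<subseteq> label_set z" "S \<noteq> {}"
  obtains k where "k < rk (top::'a)" "label z k \<in> S" "\<And>s. s \<in> S \<Longrightarrow> s \<noteq> label z k \<Longrightarrow> s \<le> z k"
proof -
  define K where "K = {k. k < rk (top::'a) \<and> label z k \<in> S}"
  have "K \<noteq> {}" "finite K" using assms unfolding K_def label_set_def by auto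
  then have k: "Max K \<in> K" and kmax: "\<And>j. j \<in> K \<Longrightarrow> j \<le> Max K" by auto
  have "s \<le> z (Max K)" if s: "s \<in> S" "s \<noteq> label z (Max K)" for s
  proof -
    obtain j where j: "j < rk (top::'a)" "s = label z j" using assms(1) s(1) unfolding label_set_def by blast
    then have "j \<in> K" using s(1) unfolding K_def by simp
    then have "j < Max K" using kmax[of j] j s(2) by (auto simp: le_less)
    then show ?thesis using label_le[OF z] j k unfolding K_def by simp
  qed
  then show thesis using that k unfolding K_def by blast
qed

text \<open>The last label of a broken circuit inside the label set of a maximal chain would have to be
  the least element of the circuit.\<close>

lemma not_broken_circuit_subset_label_set:
  assumes S: "S \<subseteq> label_set z"
  shows "\<not> broken_circuit w S"
proof
  assume "broken_circuit w S"
  then obtain C where c: "circuit C" and SC: "S = C - {ARG_MIN w a. a \<in> C}"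
    unfolding broken_circuit_def by blast
  define c0 where "c0 = (ARG_MIN w a. a \<in> C)"
  have "S \<noteq> {}" using broken_circuit_not_empty \<open>broken_circuit w S\<close> .
  then have "C \<noteq> {}" using SC by auto
  then have c0: "c0 \<in> C" "\<And>b. b \<in> C \<Longrightarrow> w c0 \<le> w b"
    unfolding c0_def by (metis arg_min_nat_lemma ex_in_conv)+
  have atoms_C: "C \<subseteq> atoms" using c by (simp add: circuit_def)
  obtain k where k: "k < rk (top::'a)" "label z k \<in> S"
    and below: "\<And>s. s \<in> S \<Longrightarrow> s \<noteq> label z k \<Longrightarrow> s \<le> z k"
    using ex_last_label[OF S \<open>S \<noteq> {}\<close>] by blast
  define b where "b = label z k"
  have "s \<le> z (Suc k)" if "s \<in> S" for s
    using below[OF that] label(3)[OF z k(1)] max_chain_mono[OF z, of k "Suc k"] b_def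
    by (cases "s = b") (auto intro: order_trans)
  then have "Sup S \<le> z (Suc k)" by (rule Sup_least)
  moreover have "c0 \<le> Sup S" using circuit_le_Sup_diff[OF c c0(1)] SC c0_def by simp
  ultimately have c0_le: "c0 \<le> z (Suc k)" by simp
  show False
  proof (cases "c0 \<le> z k")
    case True
    then have "s \<le> z k" if "s \<in> C - {b}" for s
      using that below SC b_def c0_def by (cases "s = c0") auto
    then have "Sup (C - {b}) \<le> z k" by (rule Sup_least)
    then have "b \<le> z k" using circuit_le_Sup_diff[OF c] k(2) SC b_def order_trans by blast
    then show False using label(4)[OF z k(1)] b_def by simp
  next
    case False
    then have "w b \<le> w c0" using label(5)[OF z k(1)] c0_le c0(1) atoms_C b_def by auto
    moreover have "w c0 \<le> w b" using c0(2) k(2) SC b_def by auto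
    ultimately have "b = c0" using eq_if_w_eq c0(1) atoms_C label(2)[OF z k(1)] b_def by auto
    then show False using k(2) SC b_def c0_def by auto
  qed
qed

lemma nbc_basis_label_set: "nbc_basis w (label_set z)"
  using basis_label_set[OF z] not_broken_circuit_subset_label_set by (auto simp: nbc_basis_def)

lemma chain_elt_chain_facet:
  assumes i: "i \<le> rk (top::'a)"
  shows "chain_elt (chain_facet z) i = z i"
  unfolding chain_elt_def
proof (rule the_equality)
  have "z i \<in> chain_facet z \<union> {bot, top}"
    using i max_chain_bot[OF z] max_chain_top[OF z] unfolding chain_facet_def
    by (cases "i = 0 \<or> i = rk (top::'a)") auto
  then show "z i \<in> chain_facet z \<union> {bot, top} \<and> rk (z i) = i" using max_chain_rk[OF z i] by simp
next
  fix y assume y: "y \<in> chain_facet z \<union> {bot, top} \<and> rk y = i"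
  have "z 0 = bot" "z (rk (top::'a)) = top" using max_chain_bot[OF z] max_chain_top[OF z] by auto
  with y have "y \<in> z ` {..rk (top::'a)}" unfolding chain_facet_def by force
  then obtain j where "j \<le> rk (top::'a)" "y = z j" by auto
  then show "y = z i" using y max_chain_rk[OF z] by auto
qed

lemma min_labeling_chain_facet: "min_labeling w (chain_facet z) = labels z"
  unfolding min_labeling_def labels_def using chain_elt_chain_facet by (auto simp: label_def)

lemma assoc_facet_labels: "assoc_facet (labels z) = chain_facet z"
proof -
  have "Sup (set (take i (labels z))) = z i" if "i < rk (top::'a)" for i
    using that max_chain_eq_Sup_labels[OF z, of i]
    by (simp add: labels_def take_map take_upt lessThan_atLeast0)
  then show ?thesis
    unfolding assoc_facet_def chain_facet_def by (force simp: labels_def)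
qed

lemma card_chain_facet: "card (chain_facet z) = rk (top::'a) - 1"
proof -
  have "inj_on z {1..<rk (top::'a)}" using max_chain_inj[OF z] by (auto simp: inj_on_def)
  then show ?thesis unfolding chain_facet_def by (simp add: card_image)
qed

end

lemma eq_if_mem_chain_facet:
  assumes "max_chain x" "max_chain y" "k \<le> rk (top::'a)" "x k \<in> chain_facet y"
  shows "y k = x k"
proof -
  obtain i where "i \<in> {1..<rk (top::'a)}" "x k = y i" using assms(4) unfolding chain_facet_def by auto
  then show ?thesis using max_chain_rk[OF assms(1,3)] max_chain_rk[OF assms(2), of i] by simp
qed

lemma max_chain_Sup_take:
  assumes B: "basis (set bs)" and bs: "distinct bs"
  shows "max_chain (\<lambda>k. Sup (set (take k bs)))" (is "max_chain ?z")
proof -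
  have len: "length bs = rk (top::'a)" using B distinct_card[OF bs] by (simp add: basis_def)
  have step: "?z (Suc k) = sup (?z k) (bs ! k)" if "k < rk (top::'a)" for k
    using that len by (simp add: take_Suc_conv_app_nth sup_commute)
  have rk_step: "rk (?z (Suc k)) \<le> rk (?z k) + 1" if "k < rk (top::'a)" for k
  proof (cases "bs ! k \<le> ?z k")
    case True then show ?thesis using step[OF that] by (simp add: sup.absorb1)
  next
    case False
    have "bs ! k \<in> atoms" using B that len by (auto simp: basis_def)
    then show ?thesis using step[OF that] covers_sup_atom(1)[OF _ False] by simp
  qed
  have rk_up: "rk (?z (k + d)) \<le> rk (?z k) + d" if "k + d \<le> rk (top::'a)" for k d
    using that
  proof (induction d)
    case (Suc d)
    then show ?case using rk_step[of "k + d"] by simp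
  qed simp
  have "?z (rk (top::'a)) = top" using B len by (simp add: basis_def)
  then have rk_z: "rk (?z k) = k" if "k \<le> rk (top::'a)" for k
    using rk_up[of 0 k] rk_up[of k "rk (top::'a) - k"] that rk_bot by simp
  have "covers (?z k) (?z (Suc k))" if "k < rk (top::'a)" for k
  proof (rule covers_if_rk_Suc)
    show "rk (?z (Suc k)) = rk (?z k) + 1" using rk_z[of k] rk_z[of "Suc k"] that by simp
    moreover have "?z k \<le> ?z (Suc k)" using step[OF that] by simp
    ultimately show "?z k < ?z (Suc k)" by (auto simp: le_less)
  qed
  moreover have "?z k = top" if "k \<ge> rk (top::'a)" for k using that B len by (simp add: basis_def)
  ultimately show ?thesis unfolding max_chain_def by simp
qed

lemma Delta_facets_eq:
  assumes B: "basis B"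
  shows "Delta_facets w B = chain_facet ` {z. max_chain z \<and> label_set z = B}"
proof
  show "chain_facet ` {z. max_chain z \<and> label_set z = B} \<subseteq> Delta_facets w B"
    unfolding Delta_facets_def
    using distinct_labels set_labels min_labeling_chain_facet assoc_facet_labels
    by (force intro!: exI[of _ "labels _"])
next
  show "Delta_facets w B \<subseteq> chain_facet ` {z. max_chain z \<and> label_set z = B}"
  proof
    fix F assume "F \<in> Delta_facets w B"
    then obtain bs where bs: "F = assoc_facet bs" "distinct bs" "set bs = B"
      "min_labeling w (assoc_facet bs) = bs" unfolding Delta_facets_def by blast
    define z where "z k = Sup (set (take k bs))" for k
    have z: "max_chain z" unfolding z_def using max_chain_Sup_take B bs by simp
    have len: "length bs = rk (top::'a)" using B bs distinct_card[OF bs(2)] by (simp add: basis_def)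
    have facet: "chain_facet z = assoc_facet bs"
      unfolding assoc_facet_def chain_facet_def z_def len by force
    then have "label_set z = B" using min_labeling_chain_facet[OF z] bs set_labels by metis
    then show "F \<in> chain_facet ` {z. max_chain z \<and> label_set z = B}" using z bs(1) facet by blast
  qed
qed

lemma mem_Delta_iff:
  "basis B \<Longrightarrow> G \<in> Delta w B \<longleftrightarrow> (\<exists>z. max_chain z \<and> label_set z = B \<and> G \<subseteq> chain_facet z)"
  unfolding Delta_def using Delta_facets_eq by blast

lemma cx_facets_Delta:
  assumes B: "basis B"
  shows "cx_facets (Delta w B) = Delta_facets w B"
proof -
  have "F = F'" if "F \<in> Delta_facets w B" "F' \<in> Delta_facets w B" "F \<subseteq> F'" for F F'
    using that card_chain_facet card_subset_eq unfolding Delta_facets_eq[OF B]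
    by (metis (no_types, lifting) finite imageE mem_Collect_eq)
  then show ?thesis unfolding cx_facets_def Delta_def by blast
qed

definition middle :: "'a \<Rightarrow> 'a \<Rightarrow> 'a \<Rightarrow> bool" where
  "middle u v y \<longleftrightarrow> covers u y \<and> covers y v"

definition least_middle :: "'a \<Rightarrow> 'a \<Rightarrow> 'a" where
  "least_middle u v = sup u (least_atom u v)"

lemma middle_less: "middle u v y \<Longrightarrow> u < y \<and> y < v"
  unfolding middle_def covers_def by auto

lemma least_atoms_middle:
  assumes "middle u v y"
  shows "least_atom u y \<le> v" "\<not> least_atom y v \<le> u"
  using least_atom(2,3) middle_less[OF assms] by (meson less_imp_le order_trans)+

text \<open>In an interval \<open>u < v\<close> of rank two, the chain through \<open>least_middle u v\<close> is the only one
  whose two labels ascend.\<close>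

context
  fixes u v :: 'a
  assumes uv: "u < v" and rk_uv: "rk v = rk u + 2"
begin

lemma middle_sup_atom:
  assumes a: "a \<in> atoms" "a \<le> v" "\<not> a \<le> u"
  shows "middle u v (sup u a)"
proof -
  have r: "rk (sup u a) = rk u + 1" using covers_sup_atom(1)[OF a(1,3)] .
  have "sup u a \<le> v" using a uv by simp
  moreover have "sup u a \<noteq> v" using r rk_uv by auto
  ultimately have "covers (sup u a) v" using r rk_uv by (intro covers_if_rk_Suc) (auto simp: le_less)
  then show ?thesis using covers_sup_atom(2)[OF a(1,3)] by (simp add: middle_def)
qed

lemma middle_least_middle: "middle u v (least_middle u v)"
  unfolding least_middle_def using middle_sup_atom least_atom[OF uv] by simp

lemma least_atom_least_middle: "least_atom u (least_middle u v) = least_atom u v"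
  using least_atom[OF uv] middle_less[OF middle_least_middle]
  by (intro least_atom_eqI) (auto simp: least_middle_def)

lemma not_least_atom_le_middle:
  assumes "middle u v y" "y \<noteq> least_middle u v"
  shows "\<not> least_atom u v \<le> y"
proof
  assume "least_atom u v \<le> y"
  then have "least_middle u v \<le> y" using middle_less[OF assms(1)] by (simp add: least_middle_def less_imp_le)
  moreover have "rk (least_middle u v) = rk y"
    using rk_covers middle_least_middle assms(1) by (metis middle_def)
  ultimately show False using eq_if_le_rk_eq assms(2) by blast
qed

lemma least_atoms_off_least_middle:
  assumes y: "middle u v y" "y \<noteq> least_middle u v"
  shows "least_atom y v = least_atom u v" "w (least_atom u v) < w (least_atom u y)"
proof -
  have l: "u < y" "y < v" using middle_less[OF y(1)] by auto
  have n: "\<not> least_atom u v \<le> y" by (rule not_least_atom_le_middle[OF y])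
  show "least_atom y v = least_atom u v"
    using l least_atom[OF uv] n least_atom[OF l(2)]
    by (intro least_atom_eqI) (auto dest: order.trans[OF _ less_imp_le[OF l(1)]])
  have "least_atom u y \<noteq> least_atom u v" using least_atom(2)[OF l(1)] n by auto
  moreover have "w (least_atom u v) \<le> w (least_atom u y)"
    using least_atom[OF uv] least_atom[OF l(1)] least_atoms_middle[OF y(1)] by simp
  ultimately show "w (least_atom u v) < w (least_atom u y)"
    using eq_if_w_eq least_atom(1)[OF uv] least_atom(1)[OF l(1)] by force
qed

lemma least_atom_less_at_least_middle:
  "w (least_atom u v) < w (least_atom (least_middle u v) v)"
proof -
  have l: "least_middle u v < v" using middle_less[OF middle_least_middle] by simp
  have "least_atom (least_middle u v) v \<noteq> least_atom u v"
    using least_atom(3)[OF l] by (auto simp: least_middle_def)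
  moreover have "w (least_atom u v) \<le> w (least_atom (least_middle u v) v)"
    using least_atom[OF uv] least_atom[OF l] least_atoms_middle[OF middle_least_middle] by simp
  ultimately show ?thesis using eq_if_w_eq least_atom(1)[OF uv] least_atom(1)[OF l] by force
qed

lemma least_atom_le_off_least_middle:
  assumes y: "middle u v y" "y \<noteq> least_middle u v"
  shows "w (least_atom (least_middle u v) v) \<le> w (least_atom u y)"
proof -
  have l: "u < y" "least_middle u v < v" using middle_less y(1) middle_less[OF middle_least_middle] by auto
  have "\<not> least_atom u y \<le> least_middle u v"
    using le_if_le_two_covers[of u y "least_middle u v" "least_atom u y"] y middle_least_middle least_atom[OF l(1)]
    unfolding middle_def by auto
  then show ?thesis using least_atom(4)[OF l(2)] least_atom[OF l(1)] least_atoms_middle[OF y(1)] by simp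
qed

lemma swapped_middle:
  defines "a \<equiv> least_atom (least_middle u v) v"
  shows "middle u v (sup u a)" "sup u a \<noteq> least_middle u v" "least_atom u (sup u a) = a"
proof -
  have l: "least_middle u v < v" using middle_less[OF middle_least_middle] by simp
  have a: "a \<in> atoms" "a \<le> v" "\<not> a \<le> least_middle u v" "\<not> a \<le> u"
    using least_atom[OF l] least_atoms_middle[OF middle_least_middle] unfolding a_def by auto
  show y: "middle u v (sup u a)" using middle_sup_atom a by simp
  show ne: "sup u a \<noteq> least_middle u v" using a(3) by (metis sup.cobounded2)
  show "least_atom u (sup u a) = a"
  proof (rule least_atom_eqI)
    show "u < sup u a" "a \<le> sup u a" using middle_less[OF y] by auto
    fix b assume b: "b \<in> atoms" "b \<le> sup u a" "\<not> b \<le> u"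
    have "\<not> b \<le> least_middle u v"
      using le_if_le_two_covers[of u "sup u a" "least_middle u v" b] y middle_least_middle b ne
      unfolding middle_def by auto
    moreover have "b \<le> v" using b(2) a(2) uv by (meson le_sup_iff less_imp_le order_trans)
    ultimately show "w a \<le> w b" using least_atom(4)[OF l] b(1) unfolding a_def by simp
  qed (use a in auto)
qed

lemma least_atom_inj_on_middles:
  assumes "middle u v y" "middle u v y'" "least_atom u y = least_atom u y'"
  shows "y = y'"
proof (rule ccontr)
  assume "y \<noteq> y'"
  then have "least_atom u y \<le> u"
    using le_if_le_two_covers[of u y y' "least_atom u y"] assms least_atom(2)[of u y] least_atom(2)[of u y']
      middle_less unfolding middle_def by auto
  then show False using least_atom(3) middle_less[OF assms(1)] by blast
qed

end

definition straighten :: "(nat \<Rightarrow> 'a) \<Rightarrow> nat \<Rightarrow> nat \<Rightarrow> 'a" where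
  "straighten z j = z(Suc j := least_middle (z j) (z (Suc (Suc j))))"

definition other_labels :: "(nat \<Rightarrow> 'a) \<Rightarrow> nat \<Rightarrow> 'a set" where
  "other_labels z j = label z ` ({..<rk (top::'a)} - {j, Suc j})"

lemma label_update_other: "k \<noteq> j \<Longrightarrow> k \<noteq> Suc j \<Longrightarrow> label (z(Suc j := y)) k = label z k"
  by (simp add: label_def)

context
  fixes z :: "nat \<Rightarrow> 'a" and j :: nat
  assumes z: "max_chain z" and j: "Suc j < rk (top::'a)"
begin

lemma interval_rank_two:
  "z j < z (Suc (Suc j))" "rk (z (Suc (Suc j))) = rk (z j) + 2" "middle (z j) (z (Suc (Suc j))) (z (Suc j))"
proof -
  show "z j < z (Suc (Suc j))" using max_chain_strict_mono[OF z, of j "Suc (Suc j)"] j by simp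
  show "rk (z (Suc (Suc j))) = rk (z j) + 2"
    using max_chain_rk[OF z, of j] max_chain_rk[OF z, of "Suc (Suc j)"] j by simp
  show "middle (z j) (z (Suc (Suc j))) (z (Suc j))"
    using max_chain_covers[OF z, of j] max_chain_covers[OF z, of "Suc j"] j by (simp add: middle_def)
qed

lemmas middle_least_middle_interval = middle_least_middle[OF interval_rank_two(1,2)]

lemma max_chain_update:
  assumes y: "middle (z j) (z (Suc (Suc j))) y"
  shows "max_chain (z(Suc j := y))"
  unfolding max_chain_def
proof (intro conjI allI impI)
  fix k assume k: "k < rk (top::'a)"
  consider "k = j" | "k = Suc j" | "k \<noteq> j \<and> k \<noteq> Suc j" by blast
  then show "covers ((z(Suc j := y)) k) ((z(Suc j := y)) (Suc k))"
    using y max_chain_covers[OF z k] by cases (auto simp: middle_def)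
qed (use z j max_chain_bot max_chain_top in auto)

lemma label_update:
  assumes y: "middle (z j) (z (Suc (Suc j))) y"
  shows "label (z(Suc j := y)) j = least_atom (z j) y"
    "label (z(Suc j := y)) (Suc j) = least_atom y (z (Suc (Suc j)))"
  using y minlab_eq_least_atom by (auto simp: label_def middle_def)

lemma label_set_update:
  assumes y: "middle (z j) (z (Suc (Suc j))) y"
  shows "label_set (z(Suc j := y)) = other_labels z j \<union> {least_atom (z j) y, least_atom y (z (Suc (Suc j)))}"
proof -
  have split: "{..<rk (top::'a)} = ({..<rk (top::'a)} - {j, Suc j}) \<union> {j, Suc j}" using j by auto
  have "label (z(Suc j := y)) ` ({..<rk (top::'a)} - {j, Suc j}) = other_labels z j"
    unfolding other_labels_def using label_update_other by (intro image_cong) auto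
  then show ?thesis unfolding label_set_def using label_update[OF y] by (subst split) (simp add: image_Un)
qed

lemma label_set_eq_other_labels:
  "label_set z = other_labels z j \<union> {least_atom (z j) (z (Suc j)), least_atom (z (Suc j)) (z (Suc (Suc j)))}"
  using label_set_update[OF interval_rank_two(3)] by simp

lemma other_labels_le:
  assumes "a \<in> other_labels z j" "a \<le> z (Suc (Suc j))"
  shows "a \<le> z j"
proof -
  obtain k where k: "k < rk (top::'a)" "k \<noteq> j" "k \<noteq> Suc j" "a = label z k"
    using assms(1) unfolding other_labels_def by auto
  show ?thesis
  proof (cases "k < j")
    case True
    then show ?thesis using label_le[OF z True] j k(4) by simp
  next
    case False
    then have "z (Suc (Suc j)) \<le> z k" using k(2,3) max_chain_mono[OF z] by simp
    then show ?thesis using label(4)[OF z k(1)] k(4) assms(2) order_trans by blast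
  qed
qed

lemma other_labels_atoms: "other_labels z j \<subseteq> atoms"
  unfolding other_labels_def using label(2)[OF z] by auto

lemma max_chain_straighten: "max_chain (straighten z j)"
  unfolding straighten_def using max_chain_update middle_least_middle_interval .

lemma ascent_iff:
  "w (label z j) < w (label z (Suc j)) \<longleftrightarrow> z (Suc j) = least_middle (z j) (z (Suc (Suc j)))"
proof -
  note uv = interval_rank_two
  have l: "label z j = least_atom (z j) (z (Suc j))" "label z (Suc j) = least_atom (z (Suc j)) (z (Suc (Suc j)))"
    using label(1)[OF z] j by auto
  show ?thesis
  proof (cases "z (Suc j) = least_middle (z j) (z (Suc (Suc j)))")
    case True
    then show ?thesis using l least_atom_least_middle[OF uv(1,2)] least_atom_less_at_least_middle[OF uv(1,2)]
      by simp
  next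
    case False
    then show ?thesis using l least_atoms_off_least_middle[OF uv(1,2) uv(3) False] by simp
  qed
qed

lemma ex_swap_at_ascent:
  assumes ascent: "z (Suc j) = least_middle (z j) (z (Suc (Suc j)))"
  shows "\<exists>y. middle (z j) (z (Suc (Suc j))) y \<and> y \<noteq> z (Suc j) \<and> label_set (z(Suc j := y)) = label_set z"
proof -
  note uv = interval_rank_two(1,2)
  let ?a1 = "least_atom (least_middle (z j) (z (Suc (Suc j)))) (z (Suc (Suc j)))"
  let ?y = "sup (z j) ?a1"
  note sw = swapped_middle[OF uv]
  have "label_set (z(Suc j := ?y)) = other_labels z j \<union> {?a1, least_atom (z j) (z (Suc (Suc j)))}"
    using label_set_update[OF sw(1)] sw(3) least_atoms_off_least_middle(1)[OF uv sw(1,2)] by simp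
  also have "\<dots> = label_set z"
    using label_set_eq_other_labels ascent least_atom_least_middle[OF uv] by (simp add: insert_commute)
  finally show ?thesis using sw(1,2) ascent by (intro exI[of _ ?y]) simp
qed

context
  assumes descent: "z (Suc j) \<noteq> least_middle (z j) (z (Suc (Suc j)))"
begin

lemma label_set_straighten: "lex_le (basis_key w (label_set (straighten z j))) (basis_key w (label_set z))"
proof -
  note uv = interval_rank_two
  let ?a0 = "least_atom (z j) (z (Suc (Suc j)))" and ?y0 = "least_middle (z j) (z (Suc (Suc j)))"
  let ?a1 = "least_atom ?y0 (z (Suc (Suc j)))" and ?l = "least_atom (z j) (z (Suc j))"
  let ?A = "other_labels z j \<union> {?a0}"
  have straight: "label_set (straighten z j) = insert ?a1 ?A"
    using label_set_update[OF middle_least_middle_interval] least_atom_least_middle[OF uv(1,2)]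
    unfolding straighten_def by (simp add: insert_commute)
  have old: "label_set z = insert ?l ?A"
    using label_set_eq_other_labels least_atoms_off_least_middle(1)[OF uv(1,2) uv(3) descent] by simp
  show ?thesis
  proof (cases "?a1 = ?l")
    case True
    then show ?thesis using straight old by (simp add: lex_le_def)
  next
    case False
    have y0: "least_middle (z j) (z (Suc (Suc j))) < z (Suc (Suc j))"
      using middle_less[OF middle_least_middle_interval] by simp
    have "?a1 \<le> z (Suc (Suc j))" "\<not> ?a1 \<le> z j" "?a1 \<noteq> ?a0"
      using least_atom(2)[OF y0] least_atoms_middle(2)[OF middle_least_middle_interval]
        least_atom_less_at_least_middle[OF uv(1,2)] by auto
    then have a1: "?a1 \<in> atoms" "?a1 \<notin> ?A" using other_labels_le least_atom(1)[OF y0] by auto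
    have zj: "z j < z (Suc j)" using middle_less[OF uv(3)] by simp
    have "?l \<le> z (Suc (Suc j))" "\<not> ?l \<le> z j" "?l \<noteq> ?a0"
      using least_atom(3)[OF zj] least_atoms_middle(1)[OF uv(3)]
        least_atoms_off_least_middle(2)[OF uv(1,2) uv(3) descent] by auto
    then have l: "?l \<in> atoms" "?l \<notin> ?A" using other_labels_le least_atom(1)[OF zj] by auto
    have A: "finite ?A" "?A \<subseteq> atoms" using other_labels_atoms least_atom(1)[OF uv(1)] by auto
    have "w ?a1 \<noteq> w ?l" using eq_if_w_eq a1(1) l(1) False by blast
    then have "w ?a1 < w ?l" using least_atom_le_off_least_middle[OF uv(1,2) uv(3) descent] by simp
    moreover have "w ?a1 \<notin> w ` ?A" "w ?l \<notin> w ` ?A" using a1 l A eq_if_w_eq by blast+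
    ultimately have "lex_less (sorted_list_of_set (insert (w ?a1) (w ` ?A))) (sorted_list_of_set (insert (w ?l) (w ` ?A)))"
      using lex_less_sorted_insert[of "w ` ?A" "w ?a1" "w ?l"] A(1) by simp
    then show ?thesis unfolding lex_le_def basis_key_def straight old by simp
  qed
qed

lemma label_set_update_ne_at_descent:
  assumes y: "middle (z j) (z (Suc (Suc j))) y" "y \<noteq> least_middle (z j) (z (Suc (Suc j)))" "y \<noteq> z (Suc j)"
  shows "label_set (z(Suc j := y)) \<noteq> label_set z"
proof -
  note uv = interval_rank_two
  let ?l = "least_atom (z j) (z (Suc j))"
  have "?l \<notin> other_labels z j"
    using other_labels_le least_atom(3)[OF conjunct1[OF middle_less[OF uv(3)]]] least_atoms_middle(1)[OF uv(3)] by blast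
  moreover have "?l \<noteq> least_atom (z j) y" using least_atom_inj_on_middles[OF uv(1,2) uv(3) y(1)] y(3) by auto
  moreover have "?l \<noteq> least_atom (z j) (z (Suc (Suc j)))"
    using least_atoms_off_least_middle(2)[OF uv(1,2) uv(3) descent] by auto
  ultimately have "?l \<notin> label_set (z(Suc j := y))"
    using label_set_update[OF y(1)] least_atoms_off_least_middle(1)[OF uv(1,2) y(1,2)] by auto
  moreover have "?l \<in> label_set z" using label_set_eq_other_labels by auto
  ultimately show ?thesis by auto
qed

lemma label_word_straighten_less: "(label_word (straighten z j), label_word z) \<in> lex less_than"
proof -
  note uv = interval_rank_two
  let ?z' = "straighten z j"
  have len: "length (label_word ?z') = rk (top::'a)" "length (label_word z) = rk (top::'a)"
    unfolding label_word_def labels_def by auto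
  have prefix: "take j (label_word ?z') = take j (label_word z)"
    unfolding label_word_def labels_def take_map straighten_def using j label_update_other
    by (auto simp: take_upt intro!: map_cong)
  have "label_word ?z' ! j = w (least_atom (z j) (z (Suc (Suc j))))"
    unfolding label_word_def labels_def straighten_def using j label_update(1)[OF middle_least_middle_interval]
      least_atom_least_middle[OF uv(1,2)] by simp
  moreover have "label_word z ! j = w (least_atom (z j) (z (Suc j)))"
    unfolding label_word_def labels_def using j label(1)[OF z, of j] by simp
  ultimately have less: "(label_word ?z' ! j, label_word z ! j) \<in> less_than"
    using least_atoms_off_least_middle(2)[OF uv(1,2) uv(3) descent] by simp
  have "label_word ?z' = take j (label_word z) @ label_word ?z' ! j # drop (Suc j) (label_word ?z')"
    using id_take_nth_drop[of j "label_word ?z'"] len j prefix by simp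
  moreover have "label_word z = take j (label_word z) @ label_word z ! j # drop (Suc j) (label_word z)"
    using id_take_nth_drop[of j "label_word z"] len j by simp
  ultimately have "\<exists>xs a b ys ys'. label_word ?z' = xs @ a # ys \<and> label_word z = xs @ b # ys' \<and> (a, b) \<in> less_than"
    using less by blast
  then show ?thesis unfolding lex_conv using len by simp
qed

end

lemma chain_facet_update: "chain_facet (z(Suc j := y)) = insert y (chain_facet z - {z (Suc j)})"
proof -
  have I: "{1..<rk (top::'a)} = insert (Suc j) ({1..<rk (top::'a)} - {Suc j})" using j by auto
  have "inj_on z {1..<rk (top::'a)}" using max_chain_inj[OF z] by (auto simp: inj_on_def)
  then have "z ` ({1..<rk (top::'a)} - {Suc j}) = chain_facet z - {z (Suc j)}"
    using j unfolding chain_facet_def by (simp add: inj_on_image_set_diff)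
  moreover have "(z(Suc j := y)) ` ({1..<rk (top::'a)} - {Suc j}) = z ` ({1..<rk (top::'a)} - {Suc j})" by auto
  ultimately show ?thesis unfolding chain_facet_def by (subst I) (simp only: image_insert fun_upd_same)
qed

lemma subset_chain_facet_straighten:
  "G \<subseteq> chain_facet z \<Longrightarrow> z (Suc j) \<notin> G \<Longrightarrow> G \<subseteq> chain_facet (straighten z j)"
  unfolding straighten_def using chain_facet_update by blast

lemma eq_update_if_ridge_subset:
  assumes z2: "max_chain z2" and sub: "chain_facet z - {z (Suc j)} \<subseteq> chain_facet z2"
  shows "z2 = z(Suc j := z2 (Suc j))"
proof
  fix k
  show "z2 k = (z(Suc j := z2 (Suc j))) k"
  proof (cases "k = Suc j \<or> k = 0 \<or> k \<ge> rk (top::'a)")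
    case True
    then consider "k = Suc j" | "k = 0" | "k \<ge> rk (top::'a)" by blast
    then show ?thesis
      using max_chain_bot[OF z] max_chain_bot[OF z2] max_chain_top[OF z, of k] max_chain_top[OF z2, of k]
      by cases auto
  next
    case False
    then have "z k \<in> chain_facet z - {z (Suc j)}"
      using max_chain_inj[OF z, of k "Suc j"] j unfolding chain_facet_def by auto
    then show ?thesis using eq_if_mem_chain_facet[OF z z2, of k] sub False by auto
  qed
qed

end

lemma basis_key_inj:
  assumes "A \<subseteq> atoms" "B \<subseteq> atoms" "basis_key w A = basis_key w B"
  shows "A = B"
proof -
  have "w ` A = w ` B" using assms(3) unfolding basis_key_def
    by (metis finite finite_imageI sorted_list_of_set.set_sorted_key_list_of_set)
  then show ?thesis using inj_on_image_eq_iff[OF inj_w assms(1,2)] by simp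
qed

definition ascending_outside :: "'a set \<Rightarrow> (nat \<Rightarrow> 'a) \<Rightarrow> bool" where
  "ascending_outside G z \<longleftrightarrow>
     (\<forall>j. Suc j < rk (top::'a) \<and> z (Suc j) \<notin> G \<longrightarrow> w (label z j) < w (label z (Suc j)))"

text \<open>Between two consecutive elements of \<open>G\<close> an ascending chain is the greedy one: each label is the
  least atom that is new up to the next element of \<open>G\<close>.\<close>

lemma label_eq_least_atom_if_ascending:
  assumes z: "max_chain z" and asc: "ascending_outside G z" and kq: "k < q" "q \<le> rk (top::'a)"
    and free: "\<And>t. k < t \<Longrightarrow> t < q \<Longrightarrow> z t \<notin> G"
  shows "label z k = least_atom (z k) (z q)"
proof -
  have kR: "k < rk (top::'a)" using kq by simp
  have increasing: "w (label z k) \<le> w (label z (k + d))" if "k + d < q" for d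
    using that
  proof (induction d)
    case (Suc d)
    then have "w (label z (k + d)) < w (label z (Suc (k + d)))"
      using asc free[of "Suc (k + d)"] kq unfolding ascending_outside_def by simp
    then show ?case using Suc by simp
  qed simp
  have least: "w (label z k) \<le> w a" if "k + d \<le> q" "a \<in> atoms" "a \<le> z (k + d)" "\<not> a \<le> z k" for d a
    using that
  proof (induction d)
    case (Suc d)
    show ?case
    proof (cases "a \<le> z (k + d)")
      case True
      then show ?thesis using Suc by simp
    next
      case False
      then have "w (label z (k + d)) \<le> w a" using label(5)[OF z, of "k + d"] Suc.prems kq by simp
      then show ?thesis using increasing[of d] Suc.prems by simp
    qed
  qed simp
  show ?thesis
  proof (rule sym, rule least_atom_eqI)
    show "z k < z q" using max_chain_strict_mono[OF z kq] .
    show "label z k \<in> atoms" "\<not> label z k \<le> z k" using label[OF z kR] by auto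
    show "label z k \<le> z q" using label_le[OF z kq] .
    show "w (label z k) \<le> w b" if "b \<in> atoms" "b \<le> z q" "\<not> b \<le> z k" for b
      using least[of "q - k" b] that kq by simp
  qed
qed

lemma ascending_outside_unique:
  assumes z: "max_chain z" "ascending_outside G z" "G \<subseteq> chain_facet z"
    and z': "max_chain z'" "ascending_outside G z'" "G \<subseteq> chain_facet z'"
  shows "z = z'"
proof -
  have low: "z k = z' k" if "k \<le> rk (top::'a)" for k
    using that
  proof (induction k)
    case 0
    then show ?case using max_chain_bot[OF z(1)] max_chain_bot[OF z'(1)] by simp
  next
    case (Suc k)
    define q where "q = (LEAST t. k < t \<and> (t = rk (top::'a) \<or> z t \<in> G))"
    have q: "k < q" "q = rk (top::'a) \<or> z q \<in> G" "q \<le> rk (top::'a)"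
      using LeastI[of "\<lambda>t. k < t \<and> (t = rk (top::'a) \<or> z t \<in> G)" "rk (top::'a)"]
        Least_le[of "\<lambda>t. k < t \<and> (t = rk (top::'a) \<or> z t \<in> G)" "rk (top::'a)"] Suc.prems
      unfolding q_def by auto
    have free: "z t \<notin> G" if "k < t" "t < q" for t
      using not_less_Least[of t "\<lambda>t. k < t \<and> (t = rk (top::'a) \<or> z t \<in> G)"] that q(3) unfolding q_def by auto
    have free': "z' t \<notin> G" if "k < t" "t < q" for t
      using free[OF that] eq_if_mem_chain_facet[OF z'(1) z(1), of t] z(3) that q(3) by auto
    have "z q = z' q"
      using q(2) max_chain_top[OF z(1)] max_chain_top[OF z'(1)] eq_if_mem_chain_facet[OF z(1) z'(1) q(3)] z'(3)
      by auto
    then have "label z k = label z' k"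
      using label_eq_least_atom_if_ascending[OF z(1,2) q(1,3) free]
        label_eq_least_atom_if_ascending[OF z'(1,2) q(1,3) free'] Suc by simp
    then show ?case using label(6)[OF z(1), of k] label(6)[OF z'(1), of k] Suc by simp
  qed
  have high: "z k = z' k" if "k \<ge> rk (top::'a)" for k
    using max_chain_top[OF z(1) that] max_chain_top[OF z'(1) that] by simp
  show ?thesis
  proof
    show "z k = z' k" for k using low high by (cases "k \<le> rk (top::'a)") simp_all
  qed
qed

abbreviation word_less :: "((nat \<Rightarrow> 'a) \<times> (nat \<Rightarrow> 'a)) set" where
  "word_less \<equiv> inv_image (lex less_than) label_word"

lemma wf_word_less: "wf word_less"
  by (intro wf_inv_image wf_lex wf_less_than)

lemma not_ascending_outside:
  assumes "max_chain z" "\<not> ascending_outside G z"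
  obtains j where "Suc j < rk (top::'a)" "z (Suc j) \<notin> G"
    "z (Suc j) \<noteq> least_middle (z j) (z (Suc (Suc j)))"
proof -
  obtain j where j: "Suc j < rk (top::'a)" "z (Suc j) \<notin> G" "\<not> w (label z j) < w (label z (Suc j))"
    using assms(2) unfolding ascending_outside_def by blast
  then show thesis using that ascent_iff[OF assms(1) j(1)] by blast
qed

text \<open>Straightening descents outside \<open>G\<close> decreases the label word, so a word-minimal chain through
  \<open>G\<close> is ascending outside \<open>G\<close>; straightening never increases the label set.\<close>

lemma ex_ascending_outside:
  assumes x: "max_chain x" "G \<subseteq> chain_facet x"
  obtains z where "max_chain z" "G \<subseteq> chain_facet z" "ascending_outside G z"
    "lex_le (basis_key w (label_set z)) (basis_key w (label_set x))"
proof -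
  let ?Q = "{z. max_chain z \<and> G \<subseteq> chain_facet z \<and> lex_le (basis_key w (label_set z)) (basis_key w (label_set x))}"
  have "x \<in> ?Q" using x by (simp add: lex_le_def)
  then obtain z where z: "z \<in> ?Q" and min: "\<And>y. (y, z) \<in> word_less \<Longrightarrow> y \<notin> ?Q"
    by (rule wfE_min[OF wf_word_less]) blast
  have "ascending_outside G z"
  proof (rule ccontr)
    assume "\<not> ascending_outside G z"
    then obtain j where j: "Suc j < rk (top::'a)" "z (Suc j) \<notin> G"
      and descent: "z (Suc j) \<noteq> least_middle (z j) (z (Suc (Suc j)))"
      using not_ascending_outside z by blast
    have z': "max_chain z" "G \<subseteq> chain_facet z" "lex_le (basis_key w (label_set z)) (basis_key w (label_set x))"
      using z by auto
    have "max_chain (straighten z j)" using max_chain_straighten[OF z'(1) j(1)] .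
    moreover have "G \<subseteq> chain_facet (straighten z j)"
      using subset_chain_facet_straighten[OF z'(1) j(1) z'(2) j(2)] .
    moreover have "lex_le (basis_key w (label_set (straighten z j))) (basis_key w (label_set x))"
      using lex_le_trans[OF label_set_straighten[OF z'(1) j(1) descent] z'(3)] .
    ultimately have "straighten z j \<in> ?Q" by simp
    moreover have "(straighten z j, z) \<in> word_less"
      using label_word_straighten_less[OF z'(1) j(1) descent] by simp
    ultimately show False using min by blast
  qed
  then show thesis using that z by blast
qed

definition flippable :: "'a set \<Rightarrow> (nat \<Rightarrow> 'a) \<Rightarrow> nat \<Rightarrow> bool" where
  "flippable B z j \<longleftrightarrow>
     (\<exists>y. middle (z j) (z (Suc (Suc j))) y \<and> y \<noteq> z (Suc j) \<and> label_set (z(Suc j := y)) = B)"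

context
  fixes B :: "'a set" and z :: "nat \<Rightarrow> 'a" and j :: nat
  assumes B: "basis B" and z: "max_chain z" "label_set z = B" and j: "Suc j < rk (top::'a)"
begin

lemma facets_through_ridge:
  "{F \<in> cx_facets (Delta w B). chain_facet z - {z (Suc j)} \<subseteq> F} =
     (\<lambda>y. chain_facet (z(Suc j := y))) ` {y. middle (z j) (z (Suc (Suc j))) y \<and> label_set (z(Suc j := y)) = B}"
    (is "?facets = ?flips")
proof
  show "?facets \<subseteq> ?flips"
  proof
    fix F assume "F \<in> ?facets"
    then obtain z' where z': "max_chain z'" "label_set z' = B" "F = chain_facet z'"
      and ridge: "chain_facet z - {z (Suc j)} \<subseteq> chain_facet z'"
      using cx_facets_Delta[OF B] Delta_facets_eq[OF B] by auto
    have z'_eq: "z' = z(Suc j := z' (Suc j))" using eq_update_if_ridge_subset[OF z(1) j z'(1) ridge] .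
    have "z' j = z j" "z' (Suc (Suc j)) = z (Suc (Suc j))"
      using fun_cong[OF z'_eq, of j] fun_cong[OF z'_eq, of "Suc (Suc j)"] by simp_all
    then have "middle (z j) (z (Suc (Suc j))) (z' (Suc j))" using interval_rank_two(3)[OF z'(1) j] by simp
    moreover have "label_set (z(Suc j := z' (Suc j))) = B" using z'(2) z'_eq by simp
    moreover have "F = chain_facet (z(Suc j := z' (Suc j)))" using z'(3) z'_eq by simp
    ultimately show "F \<in> ?flips" by blast
  qed
next
  show "?flips \<subseteq> ?facets"
  proof
    fix F assume "F \<in> ?flips"
    then obtain y where y: "middle (z j) (z (Suc (Suc j))) y" "label_set (z(Suc j := y)) = B"
      and F: "F = chain_facet (z(Suc j := y))" by blast
    have "F \<in> chain_facet ` {z. max_chain z \<and> label_set z = B}"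
      using F y max_chain_update[OF z(1) j y(1)] by blast
    then have "F \<in> cx_facets (Delta w B)" using cx_facets_Delta[OF B] Delta_facets_eq[OF B] by simp
    moreover have "chain_facet z - {z (Suc j)} \<subseteq> F" using F chain_facet_update[OF z(1) j] by auto
    ultimately show "F \<in> ?facets" by blast
  qed
qed

lemma card_facets_through_ridge_eq_1_iff:
  "card {F \<in> cx_facets (Delta w B). chain_facet z - {z (Suc j)} \<subseteq> F} = 1 \<longleftrightarrow> \<not> flippable B z j"
proof -
  let ?Y = "{y. middle (z j) (z (Suc (Suc j))) y \<and> label_set (z(Suc j := y)) = B}"
  have "inj_on (\<lambda>y. chain_facet (z(Suc j := y))) ?Y"
  proof (rule inj_onI)
    fix y y' assume y: "y \<in> ?Y" "y' \<in> ?Y" and eq: "chain_facet (z(Suc j := y)) = chain_facet (z(Suc j := y'))"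
    have "chain_elt (chain_facet (z(Suc j := x))) (Suc j) = x" if "x \<in> ?Y" for x
      using chain_elt_chain_facet[OF max_chain_update[OF z(1) j], of x "Suc j"] that j by simp
    then show "y = y'" using y eq by metis
  qed
  then have "card {F \<in> cx_facets (Delta w B). chain_facet z - {z (Suc j)} \<subseteq> F} = card ?Y"
    unfolding facets_through_ridge by (rule card_image)
  moreover have mem: "z (Suc j) \<in> ?Y" using interval_rank_two(3)[OF z(1) j] z(2) by simp
  have "card ?Y = 1 \<longleftrightarrow> ?Y = {z (Suc j)}"
  proof
    assume "card ?Y = 1"
    then obtain x where Y: "?Y = {x}" by (auto simp: card_1_singleton_iff)
    then have "x = z (Suc j)" using mem by (simp only: singleton_iff)
    with Y show "?Y = {z (Suc j)}" by simp
  qed simp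
  moreover have "?Y = {z (Suc j)} \<longleftrightarrow> \<not> flippable B z j"
    using mem unfolding flippable_def by blast
  ultimately show ?thesis by simp
qed

end

lemma mem_boundary_Delta_iff:
  assumes B: "basis B" and r: "rk (top::'a) = r + 1"
  shows "G \<in> boundary r (Delta w B) \<longleftrightarrow>
    (\<exists>z j. max_chain z \<and> label_set z = B \<and> Suc j < rk (top::'a) \<and>
       G \<subseteq> chain_facet z - {z (Suc j)} \<and> \<not> flippable B z j)"
proof
  assume "G \<in> boundary r (Delta w B)"
  then obtain R where R: "R \<in> Delta w B" "G \<subseteq> R" "card R + 1 = r"
    and one: "card {F \<in> cx_facets (Delta w B). R \<subseteq> F} = 1" unfolding boundary_def by blast
  obtain z where z: "max_chain z" "label_set z = B" "R \<subseteq> chain_facet z" using R(1) mem_Delta_iff[OF B] by blast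
  have card_z: "card (chain_facet z) = r" using card_chain_facet[OF z(1)] r by simp
  then have "R \<noteq> chain_facet z" using R(3) by auto
  then obtain e where e: "e \<in> chain_facet z" "e \<notin> R" using z(3) by blast
  then obtain i where "1 \<le> i" "i < rk (top::'a)" "e = z i" unfolding chain_facet_def by auto
  then obtain j where j: "Suc j < rk (top::'a)" "e = z (Suc j)" by (metis Suc_pred' less_le_trans zero_less_one)
  have "R \<subseteq> chain_facet z - {e}" using z(3) e(2) by blast
  moreover have "card (chain_facet z - {e}) = card R" using card_z R(3) e(1) by (simp add: card_Diff_singleton)
  ultimately have "R = chain_facet z - {z (Suc j)}" using j(2) by (simp add: card_subset_eq)
  then show "\<exists>z j. max_chain z \<and> label_set z = B \<and> Suc j < rk (top::'a) \<and>
       G \<subseteq> chain_facet z - {z (Suc j)} \<and> \<not> flippable B z j"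
    using z j R(2) one card_facets_through_ridge_eq_1_iff[OF B z(1,2) j(1)] by blast
next
  assume "\<exists>z j. max_chain z \<and> label_set z = B \<and> Suc j < rk (top::'a) \<and>
       G \<subseteq> chain_facet z - {z (Suc j)} \<and> \<not> flippable B z j"
  then obtain z j where z: "max_chain z" "label_set z = B" and j: "Suc j < rk (top::'a)"
    and G: "G \<subseteq> chain_facet z - {z (Suc j)}" and rigid: "\<not> flippable B z j" by blast
  have "chain_facet z - {z (Suc j)} \<in> Delta w B" using mem_Delta_iff[OF B] z by blast
  moreover have "card (chain_facet z - {z (Suc j)}) + 1 = r"
    using card_chain_facet[OF z(1)] r j unfolding chain_facet_def by (simp add: card_Diff_singleton)
  ultimately show "G \<in> boundary r (Delta w B)"
    unfolding boundary_def using G card_facets_through_ridge_eq_1_iff[OF B z j] rigid by blast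
qed

lemma not_flippable_at_descent_if_word_minimal:
  assumes z: "max_chain z" "label_set z = B" "G \<subseteq> chain_facet z"
    and j: "Suc j < rk (top::'a)" "z (Suc j) \<notin> G"
    and descent: "z (Suc j) \<noteq> least_middle (z j) (z (Suc (Suc j)))"
    and min: "\<And>y. (y, z) \<in> word_less \<Longrightarrow> y \<notin> {z. max_chain z \<and> label_set z = B \<and> G \<subseteq> chain_facet z}"
  shows "\<not> flippable B z j"
proof
  assume "flippable B z j"
  then obtain y where y: "middle (z j) (z (Suc (Suc j))) y" "y \<noteq> z (Suc j)" "label_set (z(Suc j := y)) = B"
    unfolding flippable_def by blast
  show False
  proof (cases "y = least_middle (z j) (z (Suc (Suc j)))")
    case True
    then have "straighten z j \<in> {z. max_chain z \<and> label_set z = B \<and> G \<subseteq> chain_facet z}"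
      using y(3) max_chain_straighten[OF z(1) j(1)] subset_chain_facet_straighten[OF z(1) j(1) z(3) j(2)]
      unfolding straighten_def by simp
    moreover have "(straighten z j, z) \<in> word_less" using label_word_straighten_less[OF z(1) j(1) descent] by simp
    ultimately show False using min by blast
  next
    case False
    then show False using label_set_update_ne_at_descent[OF z(1) j(1) descent y(1) False y(2)] y(3) z(2) by simp
  qed
qed

lemma boundary_Delta_subset_Delta:
  assumes "basis B" "rk (top::'a) = r + 1" "G \<in> boundary r (Delta w B)"
  shows "G \<in> Delta w B"
proof -
  obtain z j where "max_chain z" "label_set z = B" "G \<subseteq> chain_facet z - {z (Suc j)}"
    using mem_boundary_Delta_iff[OF assms(1,2)] assms(3) by blast
  then show ?thesis using mem_Delta_iff[OF assms(1)] by blast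
qed

text \<open>A boundary ridge of \<open>\<Delta>\<^sub>B\<close> sits at a descent of its facet, and straightening that descent
  leaves \<open>\<Delta>\<^sub>B\<close> towards a lexicographically smaller nbc-basis.\<close>

lemma boundary_Delta_in_earlier:
  assumes B: "basis B" and r: "rk (top::'a) = r + 1" and G: "G \<in> boundary r (Delta w B)"
  obtains B' where "nbc_basis w B'" "lex_less (basis_key w B') (basis_key w B)" "G \<in> Delta w B'"
proof -
  obtain z j where z: "max_chain z" "label_set z = B" and j: "Suc j < rk (top::'a)"
    and ridge: "G \<subseteq> chain_facet z - {z (Suc j)}" and rigid: "\<not> flippable B z j"
    using G mem_boundary_Delta_iff[OF B r] by blast
  have descent: "z (Suc j) \<noteq> least_middle (z j) (z (Suc (Suc j)))"
    using ex_swap_at_ascent[OF z(1) j] rigid z(2) unfolding flippable_def by blast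
  let ?z' = "straighten z j"
  have z': "max_chain ?z'" using max_chain_straighten[OF z(1) j] .
  have "label_set ?z' \<noteq> B"
  proof
    assume "label_set ?z' = B"
    then show False
      using rigid descent middle_least_middle_interval[OF z(1) j] unfolding flippable_def straighten_def by auto
  qed
  moreover have "label_set ?z' \<subseteq> atoms" "B \<subseteq> atoms"
    using basis_label_set[OF z'] B by (simp_all add: basis_def)
  ultimately have "basis_key w (label_set ?z') \<noteq> basis_key w B" using basis_key_inj by blast
  then have "lex_less (basis_key w (label_set ?z')) (basis_key w B)"
    using label_set_straighten[OF z(1) j descent] z(2) by (simp add: lex_le_def)
  moreover have "G \<subseteq> chain_facet ?z'" using subset_chain_facet_straighten[OF z(1) j] ridge by blast
  then have "G \<in> Delta w (label_set ?z')" using mem_Delta_iff[OF basis_label_set[OF z']] z' by blast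
  ultimately show thesis using that nbc_basis_label_set[OF z'] by blast
qed

text \<open>Conversely, take the chain of \<open>\<Delta>\<^sub>B\<close> through \<open>G\<close> with least label word. It is not the
  unique chain through \<open>G\<close> ascending outside \<open>G\<close>, since that one lives in an earlier \<open>\<Delta>\<close>; so it
  has a descent outside \<open>G\<close>, and by minimality no other facet of \<open>\<Delta>\<^sub>B\<close> contains that ridge.\<close>

lemma Delta_earlier_subset_boundary:
  assumes B: "basis B" and r: "rk (top::'a) = r + 1" and G: "G \<in> Delta w B"
    and B': "basis B'" "G \<in> Delta w B'" "lex_less (basis_key w B') (basis_key w B)"
  shows "G \<in> boundary r (Delta w B)"
proof -
  obtain x where x: "max_chain x" "label_set x = B'" "G \<subseteq> chain_facet x" using B' mem_Delta_iff by blast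
  obtain z' where z': "max_chain z'" "G \<subseteq> chain_facet z'" "ascending_outside G z'"
    and "lex_le (basis_key w (label_set z')) (basis_key w B')"
    using ex_ascending_outside[OF x(1,3)] x(2) by blast
  then have z'_earlier: "lex_less (basis_key w (label_set z')) (basis_key w B)"
    using lex_le_less_trans B'(3) by blast
  let ?Q = "{z. max_chain z \<and> label_set z = B \<and> G \<subseteq> chain_facet z}"
  obtain x where "x \<in> ?Q" using G mem_Delta_iff[OF B] by blast
  then obtain z where "z \<in> ?Q" and min: "\<And>y. (y, z) \<in> word_less \<Longrightarrow> y \<notin> ?Q"
    by (rule wfE_min[OF wf_word_less]) blast
  then have z: "max_chain z" "label_set z = B" "G \<subseteq> chain_facet z" by auto
  have "\<not> ascending_outside G z"
  proof
    assume "ascending_outside G z"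
    then have "z = z'" using ascending_outside_unique z z' by blast
    then show False using z'_earlier z(2) lex_less_irrefl by simp
  qed
  then obtain j where j: "Suc j < rk (top::'a)" "z (Suc j) \<notin> G"
    and descent: "z (Suc j) \<noteq> least_middle (z j) (z (Suc (Suc j)))"
    using not_ascending_outside z(1) by blast
  have "\<not> flippable B z j"
    using not_flippable_at_descent_if_word_minimal[OF z j descent] min by blast
  moreover have "G \<subseteq> chain_facet z - {z (Suc j)}" using z(3) j(2) by blast
  ultimately show ?thesis using mem_boundary_Delta_iff[OF B r] z(1,2) j(1) by blast
qed

end

theorem proposition4p5:
  fixes w :: "'a::finite_lattice_complete \<Rightarrow> nat" and r :: nat and B :: "'a set"
  assumes "geometric_lattice TYPE('a)"
    and "rk (top::'a) = r + 1"
    and "inj_on w atoms"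
    and "nbc_basis w B"
    and "\<exists>B'. nbc_basis w B' \<and> lex_less (basis_key w B') (basis_key w B)"
  shows "Delta w B \<inter> (\<Union>{Delta w B' | B'. nbc_basis w B' \<and> lex_less (basis_key w B') (basis_key w B)})
           = boundary r (Delta w B)"
proof -
  interpret atom_ordered_geometric_lattice w using assms(1,3) by unfold_locales
  have B: "basis B" using assms(4) by (simp add: nbc_basis_def)
  show ?thesis
  proof (intro equalityI subsetI)
    fix G assume "G \<in> Delta w B \<inter> (\<Union>{Delta w B' | B'. nbc_basis w B' \<and> lex_less (basis_key w B') (basis_key w B)})"
    then obtain B' where G: "G \<in> Delta w B" "nbc_basis w B'" "G \<in> Delta w B'"
      and earlier: "lex_less (basis_key w B') (basis_key w B)" by blast
    then have "basis B'" by (simp add: nbc_basis_def)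
    then show "G \<in> boundary r (Delta w B)"
      using Delta_earlier_subset_boundary[OF B assms(2) G(1) _ G(3) earlier] by blast
  next
    fix G assume G: "G \<in> boundary r (Delta w B)"
    obtain B' where "nbc_basis w B'" "lex_less (basis_key w B') (basis_key w B)" "G \<in> Delta w B'"
      using boundary_Delta_in_earlier[OF B assms(2) G] .
    then show "G \<in> Delta w B \<inter> (\<Union>{Delta w B' | B'. nbc_basis w B' \<and> lex_less (basis_key w B') (basis_key w B)})"
      using boundary_Delta_subset_Delta[OF B assms(2) G] by blast
  qed
qed

end
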